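(* (a) Let QHC$^-$ be the calculus with the same language as QHC whose deductive system consists only of classical predicate logic applied to all propositions, intuitionistic predicate logic applied to all problems, the rules $p\,/\,!p$ and $\alpha\,/\,?\alpha$, and the schemas $?!p\to p$, $\alpha\to\, !?\alpha$, $!(p\to q)\to(!p\to !q)$, $?(\alpha\to\beta)\to(?\alpha\to ?\beta)$, $!0\to\bot$. Then the following schemas are derivable in QHC$^-$: $?(\alpha\land\beta)\leftrightarrow ?\alpha\land ?\beta$; $?(\alpha\lor\beta)\leftrightarrow ?\alpha\lor ?\beta$; $?\bot\to 0$; $?\exists x\,\alpha(x)\leftrightarrow\exists x\,?\alpha(x)$; $?\forall x\,\alpha(x)\to\forall x\,?\alpha(x)$. (Hence QHC and QHC$^-$ have the same derivable rules.) (b) In QHC: $!p\land !q\Leftrightarrow\, !(p\land q)$; $!p\lor !q\Rightarrow\, !(p\lor q)$; $\forall x\,!p(x)\Leftrightarrow\, !\forall x\,p(x)$; $\exists x\,!p(x)\Rightarrow\, !\exists x\,p(x)$.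
   Context: QHC is a two-sorted first-order calculus. Its only terms are individual variables. Every formula is either a problem (denoted by Greek letters $\alpha,\beta,\gamma,\dots$) or a proposition (denoted by Latin letters $p,q,\dots$). Atomic formulas are proposition variables $p(t_1,\dots,t_n)$ (of proposition type), problem variables $\pi(t_1,\dots,t_n)$ (of problem type), and the constants $0$ (a proposition, classical falsity) and $\bot$ (a problem, intuitionistic absurdity). Propositions are closed under the classical connectives $\land,\lor,\to$ and quantifiers $\exists,\forall$; problems are closed under the intuitionistic connectives $\land,\lor,\to$ and quantifiers $\exists,\forall$ (the same symbols are used, distinguished by the type of the arguments). $\neg p$ abbreviates $p\to 0$, $\neg\alpha$ abbreviates $\alpha\to\bot$, and $\leftrightarrow$ is defined as usual. There are two type-conversion operators: if $p$ is a proposition then $!p$ is a problem, and if $\alpha$ is a problem then $?\alpha$ is a proposition. Deductive system of QHC: all axioms and rules of classical predicate logic applied to all propositions; all postulates and rules of intuitionistic predicate logic applied to all problems; the rules $p\,/\,!p$ and $\alpha\,/\,?\alpha$; and the schemas $?!p\to p$; $\alpha\to\, !?\alpha$; $!(p\to q)\to(!p\to !q)$; $?(\alpha\to\beta)\to(?\alpha\to ?\beta)$; $!0\to\bot$; $?(\alpha\land\beta)\leftrightarrow ?\alpha\land ?\beta$; $?(\alpha\lor\beta)\leftrightarrow ?\alpha\lor ?\beta$; $?\bot\to 0$; $?\exists x\,\alpha(x)\leftrightarrow\exists x\,?\alpha(x)$; $?\forall x\,\alpha(x)\to\forall x\,?\alpha(x)$ (usual variable side conditions implicit). $\vdash A$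 means $A$ is derivable in QHC; $A\Rightarrow B$ means $\vdash A\to B$ and $A\Leftrightarrow B$ means $\vdash A\leftrightarrow B$ (with $A,B$ of the same type); $A\vdash B$ means $B$ is derivable in QHC from the premise $A$. Notation: $\Box p := ?!p$ (a proposition) and $\nabla\alpha := !?\alpha$ (a problem). QC and QH denote classical and intuitionistic predicate calculus. *)

theory Defs
  imports Main
begin

text \<open>Individual variables are represented by de Bruijn indices (natural numbers);
  a quantifier binds index 0 of its body.  Atomic formulas are predicate
  variables (indexed by a name) applied to a list of individual variables.\<close>

datatype prp =
    PVar nat "nat list"
  | Zero
  | PAnd prp prp
  | POr prp prp
  | PImp prp prp
  | PEx prp
  | PAll prp
  | Quest pbm
and pbm =
    QVar nat "nat list"
  | Bot
  | QAnd pbm pbm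
  | QOr pbm pbm
  | QImp pbm pbm
  | QEx pbm
  | QAll pbm
  | Excl prp

text \<open>Renaming of free individual variables (terms are only variables, so
  substitution is renaming).\<close>

definition under :: "(nat \<Rightarrow> nat) \<Rightarrow> nat \<Rightarrow> nat" where
  "under f i = (case i of 0 \<Rightarrow> 0 | Suc j \<Rightarrow> Suc (f j))"

primrec renP :: "(nat \<Rightarrow> nat) \<Rightarrow> prp \<Rightarrow> prp"
  and renQ :: "(nat \<Rightarrow> nat) \<Rightarrow> pbm \<Rightarrow> pbm" where
  "renP f (PVar n ts) = PVar n (map f ts)"
| "renP f Zero = Zero"
| "renP f (PAnd p q) = PAnd (renP f p) (renP f q)"
| "renP f (POr p q) = POr (renP f p) (renP f q)"
| "renP f (PImp p q) = PImp (renP f p) (renP f q)"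
| "renP f (PEx p) = PEx (renP (under f) p)"
| "renP f (PAll p) = PAll (renP (under f) p)"
| "renP f (Quest a) = Quest (renQ f a)"
| "renQ f (QVar n ts) = QVar n (map f ts)"
| "renQ f Bot = Bot"
| "renQ f (QAnd a b) = QAnd (renQ f a) (renQ f b)"
| "renQ f (QOr a b) = QOr (renQ f a) (renQ f b)"
| "renQ f (QImp a b) = QImp (renQ f a) (renQ f b)"
| "renQ f (QEx a) = QEx (renQ (under f) a)"
| "renQ f (QAll a) = QAll (renQ (under f) a)"
| "renQ f (Excl p) = Excl (renP f p)"

text \<open>Lifting (weakening by a fresh variable) and instantiation of the
  bound variable 0 by the variable t.\<close>

abbreviation liftP where "liftP \<equiv> renP Suc"
abbreviation liftQ where "liftQ \<equiv> renQ Suc"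

definition instf :: "nat \<Rightarrow> nat \<Rightarrow> nat" where
  "instf t i = (case i of 0 \<Rightarrow> t | Suc j \<Rightarrow> j)"

abbreviation instP where "instP t \<equiv> renP (instf t)"
abbreviation instQ where "instQ t \<equiv> renQ (instf t)"

definition piff :: "prp \<Rightarrow> prp \<Rightarrow> prp" where
  "piff p q = PAnd (PImp p q) (PImp q p)"

definition qiff :: "pbm \<Rightarrow> pbm \<Rightarrow> pbm" where
  "qiff a b = QAnd (QImp a b) (QImp b a)"

text \<open>Derivability.  full = True gives QHC, full = False gives QHC-minus.
  HP, HQ are sets of premises (used as additional axioms, i.e. derivable rules).\<close>

inductive derP :: "bool \<Rightarrow> prp set \<Rightarrow> pbm set \<Rightarrow> prp \<Rightarrow> bool"
  and derQ :: "bool \<Rightarrow> prp set \<Rightarrow> pbm set \<Rightarrow> pbm \<Rightarrow> bool"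
  for full :: bool and HP :: "prp set" and HQ :: "pbm set" where
  hypP: "p \<in> HP \<Longrightarrow> derP full HP HQ p"
| hypQ: "a \<in> HQ \<Longrightarrow> derQ full HP HQ a"
| P_K: "derP full HP HQ (PImp p (PImp q p))"
| P_S: "derP full HP HQ (PImp (PImp p (PImp q r)) (PImp (PImp p q) (PImp p r)))"
| P_conjE1: "derP full HP HQ (PImp (PAnd p q) p)"
| P_conjE2: "derP full HP HQ (PImp (PAnd p q) q)"
| P_conjI: "derP full HP HQ (PImp p (PImp q (PAnd p q)))"
| P_disjI1: "derP full HP HQ (PImp p (POr p q))"
| P_disjI2: "derP full HP HQ (PImp q (POr p q))"
| P_disjE: "derP full HP HQ (PImp (PImp p r) (PImp (PImp q r) (PImp (POr p q) r)))"
| P_efq: "derP full HP HQ (PImp Zero p)"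
| P_dne: "derP full HP HQ (PImp (PImp (PImp p Zero) Zero) p)"
| P_allE: "derP full HP HQ (PImp (PAll p) (instP t p))"
| P_exI: "derP full HP HQ (PImp (instP t p) (PEx p))"
| P_MP: "derP full HP HQ (PImp p q) \<Longrightarrow> derP full HP HQ p \<Longrightarrow> derP full HP HQ q"
| P_allI: "derP full HP HQ (PImp (liftP r) p) \<Longrightarrow> derP full HP HQ (PImp r (PAll p))"
| P_exE: "derP full HP HQ (PImp p (liftP r)) \<Longrightarrow> derP full HP HQ (PImp (PEx p) r)"
| Q_K: "derQ full HP HQ (QImp a (QImp b a))"
| Q_S: "derQ full HP HQ (QImp (QImp a (QImp b c)) (QImp (QImp a b) (QImp a c)))"
| Q_conjE1: "derQ full HP HQ (QImp (QAnd a b) a)"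
| Q_conjE2: "derQ full HP HQ (QImp (QAnd a b) b)"
| Q_conjI: "derQ full HP HQ (QImp a (QImp b (QAnd a b)))"
| Q_disjI1: "derQ full HP HQ (QImp a (QOr a b))"
| Q_disjI2: "derQ full HP HQ (QImp b (QOr a b))"
| Q_disjE: "derQ full HP HQ (QImp (QImp a c) (QImp (QImp b c) (QImp (QOr a b) c)))"
| Q_efq: "derQ full HP HQ (QImp Bot a)"
| Q_allE: "derQ full HP HQ (QImp (QAll a) (instQ t a))"
| Q_exI: "derQ full HP HQ (QImp (instQ t a) (QEx a))"
| Q_MP: "derQ full HP HQ (QImp a b) \<Longrightarrow> derQ full HP HQ a \<Longrightarrow> derQ full HP HQ b"
| Q_allI: "derQ full HP HQ (QImp (liftQ c) a) \<Longrightarrow> derQ full HP HQ (QImp c (QAll a))"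
| Q_exE: "derQ full HP HQ (QImp a (liftQ c)) \<Longrightarrow> derQ full HP HQ (QImp (QEx a) c)"
| R_excl: "derP full HP HQ p \<Longrightarrow> derQ full HP HQ (Excl p)"
| R_quest: "derQ full HP HQ a \<Longrightarrow> derP full HP HQ (Quest a)"
| X_qe: "derP full HP HQ (PImp (Quest (Excl p)) p)"
| X_eq: "derQ full HP HQ (QImp a (Excl (Quest a)))"
| X_eimp: "derQ full HP HQ (QImp (Excl (PImp p q)) (QImp (Excl p) (Excl q)))"
| X_qimp: "derP full HP HQ (PImp (Quest (QImp a b)) (PImp (Quest a) (Quest b)))"
| X_ezero: "derQ full HP HQ (QImp (Excl Zero) Bot)"
| F_and: "full \<Longrightarrow> derP full HP HQ (piff (Quest (QAnd a b)) (PAnd (Quest a) (Quest b)))"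
| F_or: "full \<Longrightarrow> derP full HP HQ (piff (Quest (QOr a b)) (POr (Quest a) (Quest b)))"
| F_bot: "full \<Longrightarrow> derP full HP HQ (PImp (Quest Bot) Zero)"
| F_ex: "full \<Longrightarrow> derP full HP HQ (piff (Quest (QEx a)) (PEx (Quest a)))"
| F_all: "full \<Longrightarrow> derP full HP HQ (PImp (Quest (QAll a)) (PAll (Quest a)))"

abbreviation QHC_P :: "prp \<Rightarrow> bool" where "QHC_P \<equiv> derP True {} {}"
abbreviation QHC_Q :: "pbm \<Rightarrow> bool" where "QHC_Q \<equiv> derQ True {} {}"
abbreviation QHCm_P :: "prp \<Rightarrow> bool" where "QHCm_P \<equiv> derP False {} {}"
abbreviation QHCm_Q :: "pbm \<Rightarrow> bool" where "QHCm_Q \<equiv> derQ False {} {}"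

end

theory Submission
  imports Defs
begin

(* Everything is derived uniformly for an arbitrary flag
   full::bool and arbitrary premise sets, i.e. inside QHC-minus with premises.
   (i) Two monotonicity rules come from the conversion rules plus the
   distribution schemas: from p -> q infer !p -> !q, and from a -> b infer
   ?a -> ?b.  Together with the round-trip schemas ?!p -> p and a -> !?a they
   let us move between the two sorts.
   (ii) Each extra QHC schema of part (a) then follows: the direction
   "? of a compound -> compound of ?" (for \/, Ex, Bot) is obtained by proving
   a -> !(target) in the problem sort and applying ?! -> id; the converse
   directions and the cases /\, All are plain monotonicity.
   (iii) Hence every QHC axiom is QHC-minus derivable, and by induction on
   derivations both calculi derive the same formulas from any premises.
   (iv) The !-laws of part (b) are the duals of (ii).
   Quantifier steps use instantiation of the bound variable 0 of a
   de Bruijn body lifted under one binder, which yields the body itself. *)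

lemma under_comp: "under f (under g i) = under (f \<circ> g) i"
  by (simp add: under_def split: nat.split)

lemma ren_comp:
  "renP f (renP g p) = renP (f \<circ> g) p"
  "renQ f (renQ g a) = renQ (f \<circ> g) a"
  by (induct p and a arbitrary: f g and f g) (simp_all add: under_comp comp_def)

lemma ren_id: "renP (\<lambda>i. i) p = p" "renQ (\<lambda>i. i) a = a"
proof -
  have under_id: "under (\<lambda>i. i) = (\<lambda>i. i)"
    by (rule ext) (simp add: under_def split: nat.split)
  show "renP (\<lambda>i. i) p = p" "renQ (\<lambda>i. i) a = a"
    by (induct p and a) (simp_all add: under_id)
qed

text \<open>Lifting a body under its binder and then instantiating the bound
  variable by 0 gives back the body: this is how the quantifier axioms
  specialise to "the variable itself".\<close>

lemma inst_zero_lift_under: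
  "instP 0 (renP (under Suc) p) = p" "instQ 0 (renQ (under Suc) a) = a"
proof -
  have "instf 0 \<circ> under Suc = (\<lambda>i. i)"
    by (rule ext) (simp add: instf_def under_def split: nat.split)
  then show "instP 0 (renP (under Suc) p) = p" "instQ 0 (renQ (under Suc) a) = a"
    by (simp_all add: ren_comp ren_id)
qed

context
  fixes full :: bool and HP :: "prp set" and HQ :: "pbm set"
begin

abbreviation provP :: "prp \<Rightarrow> bool" where "provP \<equiv> derP full HP HQ"
abbreviation provQ :: "pbm \<Rightarrow> bool" where "provQ \<equiv> derQ full HP HQ"

lemma P_trans: "provP (PImp a b) \<Longrightarrow> provP (PImp b c) \<Longrightarrow> provP (PImp a c)"
  by (meson P_K P_S P_MP)
lemma Q_trans: "provQ (QImp a b) \<Longrightarrow> provQ (QImp b c) \<Longrightarrow> provQ (QImp a c)"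
  by (meson Q_K Q_S Q_MP)

lemma P_conj_intro: "provP (PImp a b) \<Longrightarrow> provP (PImp a c) \<Longrightarrow> provP (PImp a (PAnd b c))"
  by (meson P_trans P_conjI P_S P_MP)
lemma Q_conj_intro: "provQ (QImp a b) \<Longrightarrow> provQ (QImp a c) \<Longrightarrow> provQ (QImp a (QAnd b c))"
  by (meson Q_trans Q_conjI Q_S Q_MP)

lemma P_disj_elim: "provP (PImp a c) \<Longrightarrow> provP (PImp b c) \<Longrightarrow> provP (PImp (POr a b) c)"
  by (meson P_disjE P_MP)
lemma Q_disj_elim: "provQ (QImp a c) \<Longrightarrow> provQ (QImp b c) \<Longrightarrow> provQ (QImp (QOr a b) c)"
  by (meson Q_disjE Q_MP)

lemma P_uncurry: "provP (PImp a (PImp b c)) \<Longrightarrow> provP (PImp (PAnd a b) c)"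
  by (meson P_trans P_conjE1 P_conjE2 P_S P_MP)
lemma Q_uncurry: "provQ (QImp a (QImp b c)) \<Longrightarrow> provQ (QImp (QAnd a b) c)"
  by (meson Q_trans Q_conjE1 Q_conjE2 Q_S Q_MP)

lemma P_iff_intro: "provP (PImp a b) \<Longrightarrow> provP (PImp b a) \<Longrightarrow> provP (piff a b)"
  unfolding piff_def by (meson P_conjI P_MP)
lemma Q_iff_intro: "provQ (QImp a b) \<Longrightarrow> provQ (QImp b a) \<Longrightarrow> provQ (qiff a b)"
  unfolding qiff_def by (meson Q_conjI Q_MP)

lemma P_allE_self: "provP (PImp (PAll (renP (under Suc) p)) p)"
  using P_allE[of full HP HQ "renP (under Suc) p" 0] by (simp add: inst_zero_lift_under)
lemma P_exI_self: "provP (PImp p (PEx (renP (under Suc) p)))"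
  using P_exI[of full HP HQ 0 "renP (under Suc) p"] by (simp add: inst_zero_lift_under)
lemma Q_allE_self: "provQ (QImp (QAll (renQ (under Suc) a)) a)"
  using Q_allE[of full HP HQ "renQ (under Suc) a" 0] by (simp add: inst_zero_lift_under)
lemma Q_exI_self: "provQ (QImp a (QEx (renQ (under Suc) a)))"
  using Q_exI[of full HP HQ 0 "renQ (under Suc) a"] by (simp add: inst_zero_lift_under)

lemma Excl_mono: "provP (PImp p q) \<Longrightarrow> provQ (QImp (Excl p) (Excl q))"
  by (meson R_excl X_eimp Q_MP)
lemma Quest_mono: "provQ (QImp a b) \<Longrightarrow> provP (PImp (Quest a) (Quest b))"
  by (meson R_quest X_qimp P_MP)

text \<open>Transfer principle: to prove ?a -> p it suffices to prove a -> !p in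
  the problem sort (compose with ?! p -> p).\<close>

lemma Quest_imp_from_Excl: "provQ (QImp a (Excl p)) \<Longrightarrow> provP (PImp (Quest a) p)"
  by (meson Quest_mono P_trans X_qe)

text \<open>Converse transfer: a -> !p follows from ?a -> p (compose a -> !?a
  with the !-image of ?a -> p).\<close>

lemma Excl_from_Quest_imp: "provP (PImp (Quest a) p) \<Longrightarrow> provQ (QImp a (Excl p))"
  by (meson Excl_mono Q_trans X_eq)

lemma Quest_and: "provP (piff (Quest (QAnd a b)) (PAnd (Quest a) (Quest b)))"
proof (rule P_iff_intro)
  show "provP (PImp (Quest (QAnd a b)) (PAnd (Quest a) (Quest b)))"
    by (meson P_conj_intro Quest_mono Q_conjE1 Q_conjE2)
  have "provP (PImp (Quest a) (Quest (QImp b (QAnd a b))))"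
    by (rule Quest_mono[OF Q_conjI])
  then show "provP (PImp (PAnd (Quest a) (Quest b)) (Quest (QAnd a b)))"
    by (meson P_uncurry P_trans X_qimp)
qed

lemma Quest_or: "provP (piff (Quest (QOr a b)) (POr (Quest a) (Quest b)))"
proof (rule P_iff_intro)
  let ?r = "POr (Quest a) (Quest b)"
  have "provQ (QImp a (Excl ?r))" and "provQ (QImp b (Excl ?r))"
    by (meson Excl_from_Quest_imp P_disjI1 P_disjI2)+
  then have "provQ (QImp (QOr a b) (Excl ?r))" by (rule Q_disj_elim)
  then show "provP (PImp (Quest (QOr a b)) ?r)" by (rule Quest_imp_from_Excl)
  show "provP (PImp ?r (Quest (QOr a b)))"
    by (meson P_disj_elim Quest_mono Q_disjI1 Q_disjI2)
qed

lemma Quest_bot: "provP (PImp (Quest Bot) Zero)"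
  by (rule Quest_imp_from_Excl[OF Q_efq])

lemma Quest_ex: "provP (piff (Quest (QEx a)) (PEx (Quest a)))"
proof (rule P_iff_intro)
  have "provP (PImp (Quest a) (liftP (PEx (Quest a))))"
    using P_exI_self[of "Quest a"] by simp
  then have "provQ (QImp a (liftQ (Excl (PEx (Quest a)))))"
    by (simp add: Excl_from_Quest_imp)
  then have "provQ (QImp (QEx a) (Excl (PEx (Quest a))))" by (rule Q_exE)
  then show "provP (PImp (Quest (QEx a)) (PEx (Quest a)))" by (rule Quest_imp_from_Excl)
  have "provP (PImp (Quest a) (liftP (Quest (QEx a))))"
    using Quest_mono[OF Q_exI_self[of a]] by simp
  then show "provP (PImp (PEx (Quest a)) (Quest (QEx a)))" by (rule P_exE)
qed

lemma Quest_all: "provP (PImp (Quest (QAll a)) (PAll (Quest a)))"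
proof (rule P_allI)
  show "provP (PImp (liftP (Quest (QAll a))) (Quest a))"
    using Quest_mono[OF Q_allE_self[of a]] by simp
qed

lemma Excl_and: "provQ (qiff (QAnd (Excl p) (Excl q)) (Excl (PAnd p q)))"
proof (rule Q_iff_intro)
  have "provQ (QImp (Excl p) (Excl (PImp q (PAnd p q))))"
    by (rule Excl_mono[OF P_conjI])
  then show "provQ (QImp (QAnd (Excl p) (Excl q)) (Excl (PAnd p q)))"
    by (meson Q_uncurry Q_trans X_eimp)
  show "provQ (QImp (Excl (PAnd p q)) (QAnd (Excl p) (Excl q)))"
    by (meson Q_conj_intro Excl_mono P_conjE1 P_conjE2)
qed

lemma Excl_or: "provQ (QImp (QOr (Excl p) (Excl q)) (Excl (POr p q)))"
  by (meson Q_disj_elim Excl_mono P_disjI1 P_disjI2)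

lemma Excl_ex: "provQ (QImp (QEx (Excl p)) (Excl (PEx p)))"
proof (rule Q_exE)
  show "provQ (QImp (Excl p) (liftQ (Excl (PEx p))))"
    using Excl_mono[OF P_exI_self[of p]] by simp
qed

text \<open>The direction All! -> !All uses part (a)'s ?All -> All? for the
  problem !p, followed by ?!p -> p under the quantifier.\<close>

lemma Excl_all: "provQ (qiff (QAll (Excl p)) (Excl (PAll p)))"
proof (rule Q_iff_intro)
  have "provP (PImp (PAll (Quest (Excl p))) (PAll p))"
  proof (rule P_allI)
    show "provP (PImp (liftP (PAll (Quest (Excl p)))) p)"
      using P_trans[OF P_allE_self[of "Quest (Excl p)"] X_qe] by simp
  qed
  with Quest_all have "provP (PImp (Quest (QAll (Excl p))) (PAll p))"
    by (rule P_trans)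
  then show "provQ (QImp (QAll (Excl p)) (Excl (PAll p)))"
    by (rule Excl_from_Quest_imp)
  show "provQ (QImp (Excl (PAll p)) (QAll (Excl p)))"
  proof (rule Q_allI)
    show "provQ (QImp (liftQ (Excl (PAll p))) (Excl p))"
      using Excl_mono[OF P_allE_self[of p]] by simp
  qed
qed

end

text \<open>Induction on derivations: every rule is shared, and the QHC-only
  schemas are QHC-minus derivable by part (a).\<close>

lemma derivable_independent_of_full:
  "derP full HP HQ p \<Longrightarrow> derP full' HP HQ p"
  "derQ full HP HQ a \<Longrightarrow> derQ full' HP HQ a"
  by (induct rule: derP_derQ.inducts)
    (auto intro: derP_derQ.intros Quest_and Quest_or Quest_bot Quest_ex Quest_all)

theorem proposition2p5:
  shows "(\<forall>a b. QHCm_P (piff (Quest (QAnd a b)) (PAnd (Quest a) (Quest b))))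
   \<and> (\<forall>a b. QHCm_P (piff (Quest (QOr a b)) (POr (Quest a) (Quest b))))
   \<and> QHCm_P (PImp (Quest Bot) Zero)
   \<and> (\<forall>a. QHCm_P (piff (Quest (QEx a)) (PEx (Quest a))))
   \<and> (\<forall>a. QHCm_P (PImp (Quest (QAll a)) (PAll (Quest a))))
   \<and> (\<forall>HP HQ p. derP True HP HQ p \<longleftrightarrow> derP False HP HQ p)
   \<and> (\<forall>HP HQ a. derQ True HP HQ a \<longleftrightarrow> derQ False HP HQ a)
   \<and> (\<forall>p q. QHC_Q (qiff (QAnd (Excl p) (Excl q)) (Excl (PAnd p q))))
   \<and> (\<forall>p q. QHC_Q (QImp (QOr (Excl p) (Excl q)) (Excl (POr p q))))
   \<and> (\<forall>p. QHC_Q (qiff (QAll (Excl p)) (Excl (PAll p))))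
   \<and> (\<forall>p. QHC_Q (QImp (QEx (Excl p)) (Excl (PEx p))))"
proof -
  have same_prp: "derP True HP HQ p \<longleftrightarrow> derP False HP HQ p" for HP HQ p
    using derivable_independent_of_full(1) by blast
  have same_pbm: "derQ True HP HQ a \<longleftrightarrow> derQ False HP HQ a" for HP HQ a
    using derivable_independent_of_full(2) by blast
  show ?thesis
    by (intro conjI allI Quest_and Quest_or Quest_bot Quest_ex Quest_all
        same_prp same_pbm Excl_and Excl_or Excl_all Excl_ex)
qed

end
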